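(* Let $M(C,\bar\xi,\pi)$ be a Myller configuration with Darboux frame $(\bar\xi,\bar\mu,\bar v)$ and invariants $G,K,T$, with $(G(s),K(s))\neq(0,0)$ for all $s$. Then: (i) if $K\equiv 0$, $C$ is a $\bar\xi$-helix iff $\sigma_\xi=\pm T/G$ is constant; (ii) if $G\equiv 0$, $C$ is a $\bar\xi$-helix iff $\sigma_\xi=\pm T/K$ is constant; (iii) if $T\equiv 0$, $C$ is a $\bar\xi$-helix iff $\sigma_\xi=\mp\dfrac{G'K-GK'}{(G^2+K^2)^{3/2}}$ is constant.
   Context: Let $C$ be a smooth curve in Euclidean 3-space $E^3$ parametrized by arclength $s$; primes denote $d/ds$. A Myller configuration $M(C,\bar\xi,\pi)$ consists of a smooth unit vector field $\bar\xi(s)$ along $C$ and a smooth field of oriented planes $\pi(s)$ with $\bar\xi(s)\in\pi(s)$. Let $\bar v(s)$ be the unit normal of $\pi(s)$ and $\bar\mu=\bar v\times\bar\xi$. The Darboux frame satisfies $\bar\xi'=G\bar\mu+K\bar v$, $\bar\mu'=-G\bar\xi+T\bar v$, $\bar v'=-K\bar\xi-T\bar\mu$. $C$ is a $\bar\xi$-helix in $M$ if there are a constant unit vector $\bar d_\xi$ and a constant $\theta$ with $\langle\bar\xi,\bar d_\xi\rangle=\cos\theta$ along $C$. *)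

theory Defs
  imports "HOL-Analysis.Analysis"
begin

definition smooth_real_on :: "real set \<Rightarrow> (real \<Rightarrow> real) \<Rightarrow> bool" where
  "smooth_real_on I f \<longleftrightarrow> (\<forall>n. \<forall>s\<in>I. ((deriv ^^ n) f) field_differentiable (at s))"

definition smooth_vec_on :: "real set \<Rightarrow> (real \<Rightarrow> real^3) \<Rightarrow> bool" where
  "smooth_vec_on I f \<longleftrightarrow> (\<forall>i. smooth_real_on I (\<lambda>s. f s $ i))"

text \<open>Myller configuration M(C, xi, pi) along the arclength-parametrized curve r on
the open interval I, the plane field pi being given by its unit normal v,
together with its Darboux frame (xi, mu, v) and invariants G, K, T.\<close>
definition myller_darboux ::
  "real set \<Rightarrow> (real \<Rightarrow> real^3) \<Rightarrow> (real \<Rightarrow> real^3) \<Rightarrow> (real \<Rightarrow> real^3) \<Rightarrow> (real \<Rightarrow> real^3)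
   \<Rightarrow> (real \<Rightarrow> real) \<Rightarrow> (real \<Rightarrow> real) \<Rightarrow> (real \<Rightarrow> real) \<Rightarrow> bool" where
  "myller_darboux I r xi mu v G K T \<longleftrightarrow>
     is_interval I \<and> open I \<and> I \<noteq> {} \<and>
     smooth_vec_on I r \<and> smooth_vec_on I xi \<and> smooth_vec_on I v \<and>
     (\<forall>s\<in>I. norm (vector_derivative r (at s)) = 1) \<and>
     (\<forall>s\<in>I. norm (xi s) = 1 \<and> norm (v s) = 1 \<and> inner (xi s) (v s) = 0 \<and>
             mu s = cross3 (v s) (xi s)) \<and>
     (\<forall>s\<in>I. (xi has_vector_derivative (G s *\<^sub>R mu s + K s *\<^sub>R v s)) (at s) \<and>
             (mu has_vector_derivative (- G s *\<^sub>R xi s + T s *\<^sub>R v s)) (at s) \<and>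
             (v has_vector_derivative (- K s *\<^sub>R xi s - T s *\<^sub>R mu s)) (at s))"

definition xi_helix :: "real set \<Rightarrow> (real \<Rightarrow> real^3) \<Rightarrow> bool" where
  "xi_helix I xi \<longleftrightarrow> (\<exists>d theta. norm d = 1 \<and> (\<forall>s\<in>I. inner (xi s) d = cos theta))"

end

theory Submission
  imports Defs
begin

(* If <xi, d> = cos theta for a constant unit vector d, the Darboux coordinates
   (cos theta, beta, gamma) = (<xi, d>, <mu, d>, <v, d>) of d satisfy
   G beta + K gamma = 0, beta' = -G cos theta + T gamma, gamma' = -K cos theta - T beta;
   conversely every nontrivial solution of this linear system with constant first
   coordinate c makes c xi + beta mu + gamma v a constant vector with constant
   xi-component, i.e. the axis of a helix.
   If K = 0, then beta = 0, gamma is a nonzero constant and T/G = c/gamma.  G = 0 is the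
   same case for the frame (xi, v, -mu).  If T = 0, (beta, gamma) is a constant multiple
   l of the unit vector (K, -G)/|(G, K)|, whose derivative is sigma_xi (G, K); comparing
   with beta' = -G c and gamma' = -K c gives sigma_xi = -c/l. *)

lemma DERIV_unique_on_open:
  assumes "open S" "s \<in> S" "\<forall>t\<in>S. f t = g t"
    and "(f has_real_derivative D) (at s)" "(g has_real_derivative E) (at s)"
  shows "D = E"
  using has_field_derivative_transform_within_open[OF assms(4,1,2)] assms(3,5) DERIV_unique
  by blast

lemma has_vector_derivative_inner_const:
  fixes f :: "real \<Rightarrow> 'a::real_inner"
  assumes "(f has_vector_derivative f') (at s)"
  shows "((\<lambda>t. inner (f t) d) has_real_derivative inner f' d) (at s)"
  using assms unfolding has_vector_derivative_def has_field_derivative_def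
  by (rule has_derivative_eq_rhs[OF has_derivative_inner_left]) (simp add: fun_eq_iff)

lemma has_vector_derivative_vec_nth:
  assumes "(f has_vector_derivative f') (at s)"
  shows "((\<lambda>t. f t $ i) has_real_derivative f' $ i) (at s)"
  using has_vector_derivative_inner_const[OF assms, of "axis i 1"] by (simp add: inner_axis)

lemma field_differentiable_transform_within_open:
  assumes "f field_differentiable (at s)" "open S" "s \<in> S" "\<And>t. t \<in> S \<Longrightarrow> f t = g t"
  shows "g field_differentiable (at s)"
proof -
  obtain D where "(f has_field_derivative D) (at s)"
    using assms(1) unfolding field_differentiable_def by blast
  from has_field_derivative_transform_within_open[OF this assms(2-4)] show ?thesis
    unfolding field_differentiable_def by (rule exI)
qed

lemma smooth_vec_on_inner_derivative_differentiable:
  fixes f g :: "real \<Rightarrow> real^3"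
  assumes "smooth_vec_on I f" "open I" "s \<in> I"
    and f': "\<forall>t\<in>I. (f has_vector_derivative f' t) (at t)"
    and g: "(g has_vector_derivative g') (at s)"
  shows "(\<lambda>t. inner (f' t) (g t)) field_differentiable (at s)"
proof -
  have "((deriv ^^ 1) (\<lambda>t. f t $ i)) field_differentiable (at s)" for i
    using assms(1,3) unfolding smooth_vec_on_def smooth_real_on_def by blast
  then have df: "deriv (\<lambda>t. f t $ i) field_differentiable (at s)" for i
    by simp
  have dg: "(\<lambda>t. g t $ i) field_differentiable (at s)" for i
    using has_vector_derivative_vec_nth[OF g] field_differentiable_def by blast
  have "(\<lambda>t. \<Sum>i\<in>UNIV. deriv (\<lambda>t. f t $ i) t * g t $ i) field_differentiable (at s)"
    by (rule field_differentiable_sum, rule field_differentiable_mult[OF df dg])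
  moreover have "(\<Sum>i\<in>UNIV. deriv (\<lambda>t. f t $ i) t * g t $ i) = inner (f' t) (g t)" if "t \<in> I" for t
    using DERIV_imp_deriv[OF has_vector_derivative_vec_nth[OF f'[rule_format, OF that]]]
    by (simp add: inner_vec_def)
  ultimately show ?thesis
    by (rule field_differentiable_transform_within_open[OF _ assms(2,3)])
qed

lemma cross3_orthonormal_frame_eq_0:
  fixes x y e :: "real^3"
  assumes "norm x = 1" "norm y = 1" "inner x y = 0"
    and "inner e x = 0" "inner e y = 0" "inner e (cross3 y x) = 0"
  shows "e = 0"
proof -
  have "cross3 e (cross3 y x) = inner e x *\<^sub>R y - inner e y *\<^sub>R x"
    by (simp add: cross3_simps forall_3)
  moreover have "(norm (cross3 e (cross3 y x)))\<^sup>2 + (inner e (cross3 y x))\<^sup>2 = (norm e * norm (cross3 y x))\<^sup>2"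
    by (rule norm_cross_dot)
  moreover have "(norm (cross3 y x))\<^sup>2 + (inner y x)\<^sup>2 = (norm y * norm x)\<^sup>2"
    by (rule norm_cross_dot)
  ultimately have "cross3 y x \<noteq> 0" "norm e * norm (cross3 y x) = 0"
    using assms by (auto simp: inner_commute)
  then show ?thesis by simp
qed

lemma xi_helixI:
  assumes "\<forall>s\<in>I. norm (xi s) = 1" "w \<noteq> 0" "\<forall>s\<in>I. inner (xi s) w = c"
  shows "xi_helix I xi"
  unfolding xi_helix_def
proof (intro exI conjI ballI)
  show "norm (w /\<^sub>R norm w) = 1" using assms(2) by simp
  fix s assume s: "s \<in> I"
  have "\<bar>c\<bar> \<le> norm w"
    using Cauchy_Schwarz_ineq2[of "xi s" w] assms(1,3) s by simp
  then have "\<bar>c / norm w\<bar> \<le> 1"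
    by (simp add: abs_divide divide_le_eq_1)
  then show "inner (xi s) (w /\<^sub>R norm w) = cos (arccos (c / norm w))"
    using assms(3) s by (simp add: cos_arccos_abs divide_inverse mult.commute)
qed

(* (c, beta, gamma) are the coordinates in the Darboux frame of a vector with constant
   xi-coordinate c, and the equations say that c xi + beta mu + gamma v is constant. *)
definition fixed_direction_coords ::
  "real set \<Rightarrow> (real \<Rightarrow> real) \<Rightarrow> (real \<Rightarrow> real) \<Rightarrow> (real \<Rightarrow> real)
   \<Rightarrow> real \<Rightarrow> (real \<Rightarrow> real) \<Rightarrow> (real \<Rightarrow> real) \<Rightarrow> bool" where
  "fixed_direction_coords I G K T c \<beta> \<gamma> \<longleftrightarrow>
     (\<forall>s\<in>I. G s * \<beta> s + K s * \<gamma> s = 0 \<and>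
            (\<beta> has_real_derivative - G s * c + T s * \<gamma> s) (at s) \<and>
            (\<gamma> has_real_derivative - K s * c - T s * \<beta> s) (at s))"

definition has_fixed_direction ::
  "real set \<Rightarrow> (real \<Rightarrow> real) \<Rightarrow> (real \<Rightarrow> real) \<Rightarrow> (real \<Rightarrow> real) \<Rightarrow> bool" where
  "has_fixed_direction I G K T \<longleftrightarrow>
     (\<exists>c \<beta> \<gamma>. fixed_direction_coords I G K T c \<beta> \<gamma> \<and> (\<exists>s\<in>I. c \<noteq> 0 \<or> \<beta> s \<noteq> 0 \<or> \<gamma> s \<noteq> 0))"

context
  fixes I r xi mu v G K T
  assumes M: "myller_darboux I r xi mu v G K T"
begin

lemma myller_interval: "open I" "convex I" "I \<noteq> {}"
  using M is_interval_convex unfolding myller_darboux_def by auto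

lemma darboux_equations:
  assumes "s \<in> I"
  shows "(xi has_vector_derivative (G s *\<^sub>R mu s + K s *\<^sub>R v s)) (at s)"
    and "(mu has_vector_derivative (- G s *\<^sub>R xi s + T s *\<^sub>R v s)) (at s)"
    and "(v has_vector_derivative (- K s *\<^sub>R xi s - T s *\<^sub>R mu s)) (at s)"
  using M assms unfolding myller_darboux_def by auto

lemma darboux_frame_orthonormal:
  assumes "s \<in> I"
  shows "norm (xi s) = 1" "norm (v s) = 1" "mu s = cross3 (v s) (xi s)"
    and "inner (xi s) (xi s) = 1" "inner (mu s) (mu s) = 1" "inner (v s) (v s) = 1"
    and "inner (xi s) (mu s) = 0" "inner (mu s) (xi s) = 0"
    and "inner (xi s) (v s) = 0" "inner (v s) (xi s) = 0"
    and "inner (mu s) (v s) = 0" "inner (v s) (mu s) = 0"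
proof -
  have frame: "norm (xi s) = 1" "norm (v s) = 1" "inner (xi s) (v s) = 0" "mu s = cross3 (v s) (xi s)"
    using M assms unfolding myller_darboux_def by auto
  have "(norm (mu s))\<^sup>2 + (inner (v s) (xi s))\<^sup>2 = (norm (v s) * norm (xi s))\<^sup>2"
    unfolding frame(4) by (rule norm_cross_dot)
  then have "inner (mu s) (mu s) = 1"
    using frame by (simp add: inner_commute power2_norm_eq_inner)
  then show "inner (xi s) (xi s) = 1" "inner (mu s) (mu s) = 1" "inner (v s) (v s) = 1"
    using frame by (simp_all add: dot_square_norm)
  show "norm (xi s) = 1" "norm (v s) = 1" "mu s = cross3 (v s) (xi s)"
    "inner (xi s) (v s) = 0" "inner (v s) (xi s) = 0"
    using frame by (simp_all add: inner_commute)
  show "inner (xi s) (mu s) = 0" "inner (mu s) (xi s) = 0" "inner (mu s) (v s) = 0" "inner (v s) (mu s) = 0"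
    using frame dot_cross_self by (simp_all add: inner_commute)
qed

lemma darboux_invariants_deriv:
  assumes "s \<in> I"
  shows "(G has_real_derivative deriv G s) (at s)" "(K has_real_derivative deriv K s) (at s)"
proof -
  let ?xi' = "\<lambda>t. G t *\<^sub>R mu t + K t *\<^sub>R v t"
  have smooth: "smooth_vec_on I xi" and xi': "\<forall>t\<in>I. (xi has_vector_derivative ?xi' t) (at t)"
    using M darboux_equations(1) unfolding myller_darboux_def by auto
  have "(\<lambda>t. inner (?xi' t) (mu t)) field_differentiable (at s)"
    by (rule smooth_vec_on_inner_derivative_differentiable[OF smooth myller_interval(1) assms xi'
          darboux_equations(2)[OF assms]])
  moreover have "inner (?xi' t) (mu t) = G t" if "t \<in> I" for t
    using darboux_frame_orthonormal[OF that] by (simp add: inner_add_left)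
  ultimately have "G field_differentiable (at s)"
    by (rule field_differentiable_transform_within_open[OF _ myller_interval(1) assms])
  then show "(G has_real_derivative deriv G s) (at s)"
    by (simp add: DERIV_deriv_iff_field_differentiable)
  have "(\<lambda>t. inner (?xi' t) (v t)) field_differentiable (at s)"
    by (rule smooth_vec_on_inner_derivative_differentiable[OF smooth myller_interval(1) assms xi'
          darboux_equations(3)[OF assms]])
  moreover have "inner (?xi' t) (v t) = K t" if "t \<in> I" for t
    using darboux_frame_orthonormal[OF that] by (simp add: inner_add_left)
  ultimately have "K field_differentiable (at s)"
    by (rule field_differentiable_transform_within_open[OF _ myller_interval(1) assms])
  then show "(K has_real_derivative deriv K s) (at s)"
    by (simp add: DERIV_deriv_iff_field_differentiable)
qed

lemma has_fixed_direction_if_xi_helix: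
  assumes "xi_helix I xi"
  shows "has_fixed_direction I G K T"
proof -
  obtain d \<theta> where d: "norm d = 1" and angle: "\<forall>s\<in>I. inner (xi s) d = cos \<theta>"
    using assms unfolding xi_helix_def by blast
  define \<beta> where "\<beta> t = inner (mu t) d" for t
  define \<gamma> where "\<gamma> t = inner (v t) d" for t
  have "fixed_direction_coords I G K T (cos \<theta>) \<beta> \<gamma>"
    unfolding fixed_direction_coords_def
  proof (intro ballI conjI)
    fix s assume s: "s \<in> I"
    have "((\<lambda>t. inner (xi t) d) has_real_derivative G s * \<beta> s + K s * \<gamma> s) (at s)"
      using has_vector_derivative_inner_const[OF darboux_equations(1)[OF s], of d]
      unfolding \<beta>_def \<gamma>_def by (simp add: inner_add_left)
    then show "G s * \<beta> s + K s * \<gamma> s = 0"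
      using DERIV_unique_on_open[OF myller_interval(1) s angle] DERIV_const by blast
    show "(\<beta> has_real_derivative - G s * cos \<theta> + T s * \<gamma> s) (at s)"
      using has_vector_derivative_inner_const[OF darboux_equations(2)[OF s], of d] angle s
      unfolding \<beta>_def \<gamma>_def by (simp add: inner_add_left inner_diff_left)
    show "(\<gamma> has_real_derivative - K s * cos \<theta> - T s * \<beta> s) (at s)"
      using has_vector_derivative_inner_const[OF darboux_equations(3)[OF s], of d] angle s
      unfolding \<beta>_def \<gamma>_def by (simp add: inner_diff_left)
  qed
  moreover obtain s where s: "s \<in> I"
    using myller_interval(3) by blast
  moreover have "cos \<theta> \<noteq> 0 \<or> \<beta> s \<noteq> 0 \<or> \<gamma> s \<noteq> 0"
  proof (rule ccontr)
    assume "\<not> ?thesis"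
    then have "inner d (xi s) = 0" "inner d (v s) = 0" "inner d (cross3 (v s) (xi s)) = 0"
      using angle s darboux_frame_orthonormal(3)[OF s] unfolding \<beta>_def \<gamma>_def
      by (auto simp: inner_commute)
    then have "d = 0"
      using cross3_orthonormal_frame_eq_0 darboux_frame_orthonormal(1,2,9)[OF s] by blast
    then show False using d by simp
  qed
  ultimately show ?thesis
    unfolding has_fixed_direction_def by blast
qed

lemma xi_helix_if_has_fixed_direction:
  assumes "has_fixed_direction I G K T"
  shows "xi_helix I xi"
proof -
  obtain c \<beta> \<gamma> s0 where coords: "fixed_direction_coords I G K T c \<beta> \<gamma>"
    and s0: "s0 \<in> I" and nontrivial: "c \<noteq> 0 \<or> \<beta> s0 \<noteq> 0 \<or> \<gamma> s0 \<noteq> 0"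
    using assms unfolding has_fixed_direction_def by blast
  define W where "W t = c *\<^sub>R xi t + \<beta> t *\<^sub>R mu t + \<gamma> t *\<^sub>R v t" for t
  have dW: "(W has_vector_derivative 0) (at s within I)" if s: "s \<in> I" for s
  proof -
    let ?W' = "c *\<^sub>R (G s *\<^sub>R mu s + K s *\<^sub>R v s)
      + (\<beta> s *\<^sub>R (- G s *\<^sub>R xi s + T s *\<^sub>R v s) + (- G s * c + T s * \<gamma> s) *\<^sub>R mu s)
      + (\<gamma> s *\<^sub>R (- K s *\<^sub>R xi s - T s *\<^sub>R mu s) + (- K s * c - T s * \<beta> s) *\<^sub>R v s)"
    have "G s * \<beta> s + K s * \<gamma> s = 0"
      and d\<beta>: "(\<beta> has_real_derivative - G s * c + T s * \<gamma> s) (at s)"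
      and d\<gamma>: "(\<gamma> has_real_derivative - K s * c - T s * \<beta> s) (at s)"
      using coords s unfolding fixed_direction_coords_def by auto
    moreover have "?W' = - (G s * \<beta> s + K s * \<gamma> s) *\<^sub>R xi s"
      by (simp add: vec_eq_iff algebra_simps)
    moreover have "(W has_vector_derivative ?W') (at s)"
      unfolding W_def[abs_def]
      by (intro has_vector_derivative_add has_vector_derivative_scaleR
          has_vector_derivative_scaleR[where f="\<lambda>_. c" and f'=0, simplified]
          darboux_equations[OF s] d\<beta> d\<gamma>)
    ultimately have "(W has_vector_derivative 0) (at s)"
      by simp
    then show ?thesis
      by (rule has_vector_derivative_at_within)
  qed
  then obtain w where w: "\<And>s. s \<in> I \<Longrightarrow> W s = w"
    using has_vector_derivative_zero_constant[OF myller_interval(2) dW] by blast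
  have inner_w: "\<forall>s\<in>I. inner (xi s) w = c"
    using darboux_frame_orthonormal w[symmetric]
    unfolding W_def by (simp add: inner_add_right)
  have ww: "inner w w = c\<^sup>2 + (\<beta> s0)\<^sup>2 + (\<gamma> s0)\<^sup>2"
    using darboux_frame_orthonormal[OF s0] w[OF s0, symmetric]
    unfolding W_def by (simp add: inner_add_left inner_add_right power2_eq_square)
  have "c\<^sup>2 + (\<beta> s0)\<^sup>2 + (\<gamma> s0)\<^sup>2 \<noteq> 0"
    using nontrivial by (simp add: add_nonneg_eq_0_iff)
  then have "w \<noteq> 0"
    using ww by auto
  moreover have "\<forall>s\<in>I. norm (xi s) = 1"
    using darboux_frame_orthonormal(1) by blast
  ultimately show ?thesis
    using xi_helixI inner_w by blast
qed

lemma xi_helix_iff_has_fixed_direction: "xi_helix I xi \<longleftrightarrow> has_fixed_direction I G K T"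
  using has_fixed_direction_if_xi_helix xi_helix_if_has_fixed_direction by blast

end

(* Passing to the frame (xi, v, -mu) turns the invariants (G, K, T) into (K, -G, T). *)
lemma fixed_direction_coords_rotate:
  assumes "fixed_direction_coords I G K T c \<beta> \<gamma>"
  shows "fixed_direction_coords I K (\<lambda>s. - G s) T c \<gamma> (\<lambda>s. - \<beta> s)"
  unfolding fixed_direction_coords_def
proof (intro ballI conjI)
  fix s assume "s \<in> I"
  then have "G s * \<beta> s + K s * \<gamma> s = 0"
    and d\<beta>: "(\<beta> has_real_derivative - G s * c + T s * \<gamma> s) (at s)"
    and d\<gamma>: "(\<gamma> has_real_derivative - K s * c - T s * \<beta> s) (at s)"
    using assms unfolding fixed_direction_coords_def by auto
  then show "K s * \<gamma> s + - G s * - \<beta> s = 0"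
    by simp
  show "(\<gamma> has_real_derivative - K s * c + T s * - \<beta> s) (at s)"
    using d\<gamma> by simp
  show "((\<lambda>s. - \<beta> s) has_real_derivative - (- G s) * c - T s * \<gamma> s) (at s)"
    using DERIV_minus[OF d\<beta>] by simp
qed

lemma has_fixed_direction_rotate:
  "has_fixed_direction I G K T \<longleftrightarrow> has_fixed_direction I K (\<lambda>s. - G s) T"
proof
  show "has_fixed_direction I G K T \<Longrightarrow> has_fixed_direction I K (\<lambda>s. - G s) T"
    unfolding has_fixed_direction_def using fixed_direction_coords_rotate by fastforce
next
  assume "has_fixed_direction I K (\<lambda>s. - G s) T"
  then obtain c \<beta> \<gamma> s where coords: "fixed_direction_coords I K (\<lambda>s. - G s) T c \<beta> \<gamma>"
    and "s \<in> I" "c \<noteq> 0 \<or> \<beta> s \<noteq> 0 \<or> \<gamma> s \<noteq> 0"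
    unfolding has_fixed_direction_def by blast
  moreover have "fixed_direction_coords I G K T c (\<lambda>s. - \<gamma> s) \<beta>"
    using fixed_direction_coords_rotate[OF fixed_direction_coords_rotate[OF
        fixed_direction_coords_rotate[OF coords]]] by simp
  ultimately show "has_fixed_direction I G K T"
    unfolding has_fixed_direction_def by force
qed

lemma has_fixed_direction_iff_T_div_G_constant:
  assumes "open I" "convex I" "I \<noteq> {}"
    and K0: "\<forall>s\<in>I. K s = 0" and G: "\<forall>s\<in>I. G s \<noteq> 0"
  shows "has_fixed_direction I G K T \<longleftrightarrow> (\<exists>k. \<forall>s\<in>I. T s / G s = k)"
proof
  assume "has_fixed_direction I G K T"
  then obtain c \<beta> \<gamma> s0 where coords: "fixed_direction_coords I G K T c \<beta> \<gamma>"
    and s0: "s0 \<in> I" and nontrivial: "c \<noteq> 0 \<or> \<beta> s0 \<noteq> 0 \<or> \<gamma> s0 \<noteq> 0"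
    unfolding has_fixed_direction_def by blast
  have \<beta>0: "\<forall>s\<in>I. \<beta> s = 0"
    using coords K0 G unfolding fixed_direction_coords_def by auto
  have T\<gamma>: "T s * \<gamma> s = G s * c" if "s \<in> I" for s
  proof -
    have "(\<beta> has_real_derivative - G s * c + T s * \<gamma> s) (at s)"
      using coords that unfolding fixed_direction_coords_def by blast
    then have "- G s * c + T s * \<gamma> s = 0"
      using DERIV_unique_on_open[OF assms(1) that \<beta>0] DERIV_const by blast
    then show ?thesis by simp
  qed
  have "(\<gamma> has_real_derivative 0) (at s)" if "s \<in> I" for s
    using coords K0 \<beta>0 that unfolding fixed_direction_coords_def by auto
  then obtain b where b: "\<forall>s\<in>I. \<gamma> s = b"
    using has_field_derivative_0_imp_constant_on[OF _ convex_connected[OF assms(2)] assms(1)]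
    unfolding constant_on_def by blast
  have "b \<noteq> 0"
  proof
    assume "b = 0"
    then have "G s0 * c = 0" using T\<gamma>[OF s0] b s0 by simp
    then show False using nontrivial \<beta>0 b \<open>b = 0\<close> G s0 by auto
  qed
  then have "\<forall>s\<in>I. T s / G s = c / b"
    using T\<gamma> b G by (auto simp: field_simps)
  then show "\<exists>k. \<forall>s\<in>I. T s / G s = k" ..
next
  assume "\<exists>k. \<forall>s\<in>I. T s / G s = k"
  then obtain k where "\<forall>s\<in>I. T s / G s = k" ..
  then have "\<forall>s\<in>I. T s = k * G s"
    using G by (auto simp: field_simps)
  then have "fixed_direction_coords I G K T k (\<lambda>_. 0) (\<lambda>_. 1)"
    using K0 unfolding fixed_direction_coords_def by simp
  moreover obtain s where "s \<in> I"
    using \<open>I \<noteq> {}\<close> by blast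
  ultimately show "has_fixed_direction I G K T"
    unfolding has_fixed_direction_def by fastforce
qed

definition pair_norm :: "(real \<Rightarrow> real) \<Rightarrow> (real \<Rightarrow> real) \<Rightarrow> real \<Rightarrow> real" where
  "pair_norm G K t = sqrt ((G t)\<^sup>2 + (K t)\<^sup>2)"

lemma pair_norm_mult_self: "pair_norm G K t * pair_norm G K t = (G t)\<^sup>2 + (K t)\<^sup>2"
  unfolding pair_norm_def by simp

lemma pair_norm_pos: "(G t, K t) \<noteq> (0, 0) \<Longrightarrow> pair_norm G K t > 0"
  unfolding pair_norm_def by (auto simp: sum_power2_gt_zero_iff)

definition sigma_xi :: "(real \<Rightarrow> real) \<Rightarrow> (real \<Rightarrow> real) \<Rightarrow> real \<Rightarrow> real" where
  "sigma_xi G K s = - (deriv G s * K s - G s * deriv K s) / ((G s)\<^sup>2 + (K s)\<^sup>2) powr (3/2)"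

lemma DERIV_normalized_pair:
  fixes G K :: "real \<Rightarrow> real"
  assumes dG: "(G has_real_derivative deriv G s) (at s)"
    and dK: "(K has_real_derivative deriv K s) (at s)"
    and nz: "(G s, K s) \<noteq> (0, 0)"
  shows "((\<lambda>t. G t / pair_norm G K t) has_real_derivative - K s * sigma_xi G K s) (at s)"
    and "((\<lambda>t. K t / pair_norm G K t) has_real_derivative G s * sigma_xi G K s) (at s)"
proof -
  define r where "r = pair_norm G K s"
  have r: "r > 0" "r * r = (G s)\<^sup>2 + (K s)\<^sup>2"
    unfolding r_def using pair_norm_pos[where G=G and K=K, OF nz] pair_norm_mult_self by auto
  have "((G s)\<^sup>2 + (K s)\<^sup>2) powr (3/2) = ((G s)\<^sup>2 + (K s)\<^sup>2) * r"
    using powr_add[of "(G s)\<^sup>2 + (K s)\<^sup>2" 1 "1/2"] by (simp add: powr_half_sqrt r_def pair_norm_def)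
  then have sigma: "sigma_xi G K s = (G s * deriv K s - deriv G s * K s) / (r * r * r)"
    unfolding sigma_xi_def r(2)[symmetric] by (simp add: algebra_simps)
  have "(G s)\<^sup>2 + (K s)\<^sup>2 > 0" "sqrt ((G s)\<^sup>2 + (K s)\<^sup>2) \<noteq> 0"
    using r unfolding r_def pair_norm_def by auto
  then have dr: "(pair_norm G K has_real_derivative (G s * deriv G s + K s * deriv K s) / r) (at s)"
    unfolding pair_norm_def[abs_def] r_def
    by (auto intro!: derivative_eq_intros dG dK simp: field_simps)
  have "(deriv G s * r - G s * ((G s * deriv G s + K s * deriv K s) / r)) / (r * r) = - K s * sigma_xi G K s"
  proof -
    have "deriv G s * r - G s * ((G s * deriv G s + K s * deriv K s) / r)
        = (deriv G s * (r * r) - G s * (G s * deriv G s + K s * deriv K s)) / r"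
      using r(1) by (simp add: field_simps)
    also have "\<dots> = K s * (deriv G s * K s - G s * deriv K s) / r"
      unfolding r by (simp add: algebra_simps power2_eq_square)
    finally show ?thesis using r by (simp add: sigma field_simps)
  qed
  then show "((\<lambda>t. G t / pair_norm G K t) has_real_derivative - K s * sigma_xi G K s) (at s)"
    using DERIV_divide[OF dG dr] r by (simp add: r_def)
  have "(deriv K s * r - K s * ((G s * deriv G s + K s * deriv K s) / r)) / (r * r) = G s * sigma_xi G K s"
  proof -
    have "deriv K s * r - K s * ((G s * deriv G s + K s * deriv K s) / r)
        = (deriv K s * (r * r) - K s * (G s * deriv G s + K s * deriv K s)) / r"
      using r(1) by (simp add: field_simps)
    also have "\<dots> = G s * (G s * deriv K s - deriv G s * K s) / r"
      unfolding r by (simp add: algebra_simps power2_eq_square)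
    finally show ?thesis using r by (simp add: sigma field_simps)
  qed
  then show "((\<lambda>t. K t / pair_norm G K t) has_real_derivative G s * sigma_xi G K s) (at s)"
    using DERIV_divide[OF dK dr] r by (simp add: r_def)
qed

lemma fixed_direction_coords_T_zero_proportional:
  assumes "open I" "convex I"
    and nz: "\<forall>s\<in>I. (G s, K s) \<noteq> (0, 0)"
    and dG: "\<forall>s\<in>I. (G has_real_derivative deriv G s) (at s)"
    and dK: "\<forall>s\<in>I. (K has_real_derivative deriv K s) (at s)"
    and T0: "\<forall>s\<in>I. T s = 0"
    and coords: "fixed_direction_coords I G K T c \<beta> \<gamma>"
  obtains l where "\<forall>s\<in>I. \<beta> s = l * (K s / pair_norm G K s)"
    and "\<forall>s\<in>I. \<gamma> s = - l * (G s / pair_norm G K s)"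
proof -
  let ?n = "pair_norm G K"
  have eqs: "G s * \<beta> s + K s * \<gamma> s = 0" "(\<beta> has_real_derivative - G s * c) (at s)"
    "(\<gamma> has_real_derivative - K s * c) (at s)" if "s \<in> I" for s
    using coords T0 that unfolding fixed_direction_coords_def by auto
  (* l is the coordinate of (beta, gamma) along (K, -G)/|(G, K)|, the unit vector orthogonal
     to (G, K); its derivative sigma_xi (G beta + K gamma) vanishes. *)
  define l where "l t = \<beta> t * (K t / ?n t) - \<gamma> t * (G t / ?n t)" for t
  have "(l has_real_derivative 0) (at s)" if s: "s \<in> I" for s
  proof -
    have "(l has_real_derivative
        \<beta> s * (G s * sigma_xi G K s) + (- G s * c) * (K s / ?n s)
        - (\<gamma> s * (- K s * sigma_xi G K s) + (- K s * c) * (G s / ?n s))) (at s)"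
      unfolding l_def[abs_def]
      using DERIV_normalized_pair[of G s K] dG dK nz s
      by (intro DERIV_diff DERIV_mult' eqs(2,3)[OF s]) auto
    moreover have "\<beta> s * (G s * sigma_xi G K s) + (- G s * c) * (K s / ?n s)
        - (\<gamma> s * (- K s * sigma_xi G K s) + (- K s * c) * (G s / ?n s))
        = sigma_xi G K s * (G s * \<beta> s + K s * \<gamma> s)"
      by (simp add: algebra_simps)
    ultimately show ?thesis
      using eqs(1)[OF s] by simp
  qed
  then obtain l0 where l0: "\<forall>s\<in>I. l s = l0"
    using has_field_derivative_0_imp_constant_on[OF _ convex_connected[OF assms(2)] assms(1)]
    unfolding constant_on_def by blast
  have "\<beta> s = l0 * (K s / ?n s) \<and> \<gamma> s = - l0 * (G s / ?n s)" if s: "s \<in> I" for s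
  proof -
    have n: "?n s \<noteq> 0" "?n s * ?n s = (G s)\<^sup>2 + (K s)\<^sup>2"
      using pair_norm_pos[where G=G and K=K] nz s pair_norm_mult_self by force+
    have "l0 * ?n s = l s * ?n s"
      using l0 s by simp
    also have "\<dots> = \<beta> s * K s - \<gamma> s * G s"
      unfolding l_def using n(1) by (simp add: field_simps)
    finally have "(\<beta> s * ?n s - l0 * K s) * ?n s = 0" "(\<gamma> s * ?n s + l0 * G s) * ?n s = 0"
      using eqs(1)[OF s] n(2) by algebra+
    then have "\<beta> s * ?n s = l0 * K s" "\<gamma> s * ?n s = - l0 * G s"
      using n(1) by auto
    then show ?thesis
      using n(1) by (simp add: field_simps)
  qed
  then show ?thesis
    using that by blast
qed

lemma sigma_xi_constant_if_has_fixed_direction: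
  assumes "open I" "convex I"
    and nz: "\<forall>s\<in>I. (G s, K s) \<noteq> (0, 0)"
    and dG: "\<forall>s\<in>I. (G has_real_derivative deriv G s) (at s)"
    and dK: "\<forall>s\<in>I. (K has_real_derivative deriv K s) (at s)"
    and T0: "\<forall>s\<in>I. T s = 0"
    and "has_fixed_direction I G K T"
  shows "\<exists>k. \<forall>s\<in>I. sigma_xi G K s = k"
proof -
  obtain c \<beta> \<gamma> s0 where coords: "fixed_direction_coords I G K T c \<beta> \<gamma>"
    and s0: "s0 \<in> I" and nontrivial: "c \<noteq> 0 \<or> \<beta> s0 \<noteq> 0 \<or> \<gamma> s0 \<noteq> 0"
    using assms(7) unfolding has_fixed_direction_def by blast
  have d\<beta>: "(\<beta> has_real_derivative - G s * c) (at s)"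
    and d\<gamma>: "(\<gamma> has_real_derivative - K s * c) (at s)" if "s \<in> I" for s
    using coords T0 that unfolding fixed_direction_coords_def by auto
  obtain l where \<beta>: "\<forall>s\<in>I. \<beta> s = l * (K s / pair_norm G K s)"
    and \<gamma>: "\<forall>s\<in>I. \<gamma> s = - l * (G s / pair_norm G K s)"
    using fixed_direction_coords_T_zero_proportional[OF assms(1-6) coords] by blast
  have "l \<noteq> 0"
  proof
    assume "l = 0"
    then have \<beta>0: "\<forall>s\<in>I. \<beta> s = 0" and \<gamma>0: "\<forall>s\<in>I. \<gamma> s = 0"
      using \<beta> \<gamma> by auto
    have "- G s0 * c = 0"
      by (rule DERIV_unique_on_open[OF assms(1) s0 \<beta>0 d\<beta>[OF s0] DERIV_const])
    moreover have "- K s0 * c = 0"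
      by (rule DERIV_unique_on_open[OF assms(1) s0 \<gamma>0 d\<gamma>[OF s0] DERIV_const])
    ultimately show False
      using nontrivial \<beta>0 \<gamma>0 nz s0 by auto
  qed
  have "sigma_xi G K s = - c / l" if s: "s \<in> I" for s
  proof -
    have "- G s * c = l * (G s * sigma_xi G K s)"
      using DERIV_unique_on_open[OF assms(1) s \<beta> d\<beta>[OF s]]
        DERIV_cmult[OF DERIV_normalized_pair(2)[of G s K]] dG dK nz s by blast
    moreover have "- K s * c = - l * (- K s * sigma_xi G K s)"
      using DERIV_unique_on_open[OF assms(1) s \<gamma> d\<gamma>[OF s]]
        DERIV_cmult[OF DERIV_normalized_pair(1)[of G s K]] dG dK nz s by blast
    ultimately have "G s * (c + l * sigma_xi G K s) = 0" "K s * (c + l * sigma_xi G K s) = 0"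
      by (simp_all add: algebra_simps)
    then have "c + l * sigma_xi G K s = 0"
      using nz s by auto
    then show ?thesis
      using \<open>l \<noteq> 0\<close> by (simp add: field_simps)
  qed
  then show ?thesis by blast
qed

lemma has_fixed_direction_if_sigma_xi_constant:
  assumes "I \<noteq> {}"
    and nz: "\<forall>s\<in>I. (G s, K s) \<noteq> (0, 0)"
    and dG: "\<forall>s\<in>I. (G has_real_derivative deriv G s) (at s)"
    and dK: "\<forall>s\<in>I. (K has_real_derivative deriv K s) (at s)"
    and T0: "\<forall>s\<in>I. T s = 0"
    and k: "\<forall>s\<in>I. sigma_xi G K s = k"
  shows "has_fixed_direction I G K T"
proof -
  let ?n = "pair_norm G K"
  have "fixed_direction_coords I G K T k (\<lambda>t. - (K t / ?n t)) (\<lambda>t. G t / ?n t)"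
    unfolding fixed_direction_coords_def
  proof (intro ballI conjI)
    fix s assume s: "s \<in> I"
    show "G s * - (K s / ?n s) + K s * (G s / ?n s) = 0"
      by (simp add: algebra_simps)
    show "((\<lambda>t. - (K t / ?n t)) has_real_derivative - G s * k + T s * (G s / ?n s)) (at s)"
      using DERIV_minus[OF DERIV_normalized_pair(2)[of G s K]] dG dK nz k T0 s by simp
    show "((\<lambda>t. G t / ?n t) has_real_derivative - K s * k - T s * - (K s / ?n s)) (at s)"
      using DERIV_normalized_pair(1)[of G s K] dG dK nz k T0 s by simp
  qed
  moreover obtain s where "s \<in> I"
    using assms(1) by blast
  moreover have "G s / ?n s \<noteq> 0 \<or> - (K s / ?n s) \<noteq> 0"
    using nz pair_norm_pos[where G=G and K=K] \<open>s \<in> I\<close> by force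
  ultimately show ?thesis
    unfolding has_fixed_direction_def by blast
qed

lemma has_fixed_direction_iff_sigma_xi_constant:
  assumes "open I" "convex I" "I \<noteq> {}"
    and "\<forall>s\<in>I. (G s, K s) \<noteq> (0, 0)"
    and "\<forall>s\<in>I. (G has_real_derivative deriv G s) (at s)"
    and "\<forall>s\<in>I. (K has_real_derivative deriv K s) (at s)"
    and "\<forall>s\<in>I. T s = 0"
  shows "has_fixed_direction I G K T \<longleftrightarrow> (\<exists>k. \<forall>s\<in>I. sigma_xi G K s = k)"
  using sigma_xi_constant_if_has_fixed_direction[OF assms(1,2,4-7)]
    has_fixed_direction_if_sigma_xi_constant[OF assms(3-7)] by blast

theorem corollary8:
  fixes I :: "real set" and r xi mu v :: "real \<Rightarrow> real^3" and G K T :: "real \<Rightarrow> real"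
  assumes M: "myller_darboux I r xi mu v G K T"
    and nz: "\<forall>s\<in>I. (G s, K s) \<noteq> (0, 0)"
  shows "((\<forall>s\<in>I. K s = 0) \<longrightarrow>
            (xi_helix I xi \<longleftrightarrow> (\<exists>c. \<forall>s\<in>I. T s / G s = c)))
       \<and> ((\<forall>s\<in>I. G s = 0) \<longrightarrow>
            (xi_helix I xi \<longleftrightarrow> (\<exists>c. \<forall>s\<in>I. T s / K s = c)))
       \<and> ((\<forall>s\<in>I. T s = 0) \<longrightarrow>
            (xi_helix I xi \<longleftrightarrow>
               (\<exists>c. \<forall>s\<in>I. - (deriv G s * K s - G s * deriv K s) / ((G s)\<^sup>2 + (K s)\<^sup>2) powr (3/2) = c)))"
proof -
  note I = myller_interval[OF M]
  have helix: "xi_helix I xi \<longleftrightarrow> has_fixed_direction I G K T"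
    by (rule xi_helix_iff_has_fixed_direction[OF M])
  have dG: "\<forall>s\<in>I. (G has_real_derivative deriv G s) (at s)"
    and dK: "\<forall>s\<in>I. (K has_real_derivative deriv K s) (at s)"
    using darboux_invariants_deriv[OF M] by blast+
  show ?thesis
  proof (intro conjI impI)
    assume K0: "\<forall>s\<in>I. K s = 0"
    then have "\<forall>s\<in>I. G s \<noteq> 0"
      using nz by auto
    then show "xi_helix I xi \<longleftrightarrow> (\<exists>c. \<forall>s\<in>I. T s / G s = c)"
      unfolding helix by (rule has_fixed_direction_iff_T_div_G_constant[OF I K0])
  next
    assume "\<forall>s\<in>I. G s = 0"
    then have "\<forall>s\<in>I. - G s = 0" "\<forall>s\<in>I. K s \<noteq> 0"
      using nz by auto
    then show "xi_helix I xi \<longleftrightarrow> (\<exists>c. \<forall>s\<in>I. T s / K s = c)"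
      unfolding helix has_fixed_direction_rotate[of I G K T]
      by (rule has_fixed_direction_iff_T_div_G_constant[OF I])
  next
    assume "\<forall>s\<in>I. T s = 0"
    then show "xi_helix I xi \<longleftrightarrow>
        (\<exists>c. \<forall>s\<in>I. - (deriv G s * K s - G s * deriv K s) / ((G s)\<^sup>2 + (K s)\<^sup>2) powr (3/2) = c)"
      unfolding helix sigma_xi_def[symmetric]
      by (rule has_fixed_direction_iff_sigma_xi_constant[OF I nz dG dK])
  qed
qed

end
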